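(* Let $N\geq 1$, let $\alpha,\beta\in\mathbb{R}$, and let $a_1,\dots,a_N\in[0,2\pi)$. For each $i$ let $\Omega_i^*=\frac1N\sum_{j=1}^N\sin(a_i-a_j+\alpha)\sin(a_i-a_j+\beta)$. Consider the layer equation (the system at $\varepsilon=0$) \[ \dot\psi_i = -\Omega_i^*+\frac{1}{N}\sum_{j=1}^N\sin(a_i-a_j+\beta)\sin(\psi_i+a_i-\psi_j-a_j+\alpha)-\frac{1}{N}\sum_{j=1}^N\sigma_{ij}\sin(\psi_i+a_i-\psi_j-a_j+\alpha),\qquad \dot\sigma_{ij}=0, \] for $i,j=1,\ldots,N$, of the slow-fast system obtained by adding $\dot\sigma_{ij}=-\varepsilon\big(\sin(\psi_i+a_i-\psi_j-a_j+\beta)-\sin(a_i-a_j+\beta)+\sigma_{ij}\big)$. Then the equilibrium point $(\psi_i,\sigma_{ij})=(0,0)$ of the layer equation is non-hyperbolic. In particular, the antipodal solution, corresponding to $a_i\in\{0,\pi\}$ for all $i$, is nilpotent for $\beta=0$.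
   Context: This system arises from the adaptive Kuramoto network $\dot\phi_i=-\frac1N\sum_j\kappa_{ij}\sin(\phi_i-\phi_j+\alpha)$, $\dot\kappa_{ij}=-\varepsilon(\sin(\phi_i-\phi_j+\beta)+\kappa_{ij})$ via the co-rotating coordinates $\psi_i=\phi_i-(\Omega^*t+a_i)$ and shifted weights $\sigma_{ij}=\kappa_{ij}+\sin(a_i-a_j+\beta)$. An equilibrium is non-hyperbolic if its Jacobian has an eigenvalue with zero real part, and nilpotent if all eigenvalues of its Jacobian are zero. *)

theory Defs
  imports "HOL-Analysis.Derivative" "Jordan_Normal_Form.Char_Poly"
begin

text \<open>The state is the flattened real vector of dimension N + N*N:
  entry i (i < N) is psi_i, entry N + i*N + j (i,j < N) is sigma_ij.
  Indices run over 0..N-1 instead of 1..N.\<close>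

definition Omega_star :: "nat \<Rightarrow> real \<Rightarrow> real \<Rightarrow> (nat \<Rightarrow> real) \<Rightarrow> nat \<Rightarrow> real" where
  "Omega_star N \<alpha> \<beta> a i =
     (1 / real N) * (\<Sum>j<N. sin (a i - a j + \<alpha>) * sin (a i - a j + \<beta>))"

definition sig_idx :: "nat \<Rightarrow> nat \<Rightarrow> nat \<Rightarrow> nat" where
  "sig_idx N i j = N + i * N + j"

definition state_dim :: "nat \<Rightarrow> nat" where
  "state_dim N = N + N * N"

definition layer_field :: "nat \<Rightarrow> real \<Rightarrow> real \<Rightarrow> (nat \<Rightarrow> real) \<Rightarrow> real vec \<Rightarrow> real vec" where
  "layer_field N \<alpha> \<beta> a x = vec (state_dim N) (\<lambda>r.
     if r < N then
       - Omega_star N \<alpha> \<beta> a r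
       + (1 / real N) * (\<Sum>j<N. sin (a r - a j + \<beta>) * sin (x $ r + a r - x $ j - a j + \<alpha>))
       - (1 / real N) * (\<Sum>j<N. x $ sig_idx N r j * sin (x $ r + a r - x $ j - a j + \<alpha>))
     else 0)"

definition layer_jacobian :: "nat \<Rightarrow> real \<Rightarrow> real \<Rightarrow> (nat \<Rightarrow> real) \<Rightarrow> real vec \<Rightarrow> real mat" where
  "layer_jacobian N \<alpha> \<beta> a x0 = mat (state_dim N) (state_dim N) (\<lambda>(r, c).
     deriv (\<lambda>t. layer_field N \<alpha> \<beta> a (x0 + t \<cdot>\<^sub>v unit_vec (state_dim N) c) $ r) 0)"

definition non_hyperbolic :: "real mat \<Rightarrow> bool" where
  "non_hyperbolic J \<longleftrightarrow> (\<exists>z. eigenvalue (map_mat complex_of_real J) z \<and> Re z = 0)"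

definition nilpotent_eq :: "real mat \<Rightarrow> bool" where
  "nilpotent_eq J \<longleftrightarrow> (\<forall>z. eigenvalue (map_mat complex_of_real J) z \<longrightarrow> z = 0)"

end

theory Submission
  imports Defs
begin

text \<open>At \<open>\<epsilon> = 0\<close> the weights \<open>\<sigma>\<^sub>i\<^sub>j\<close> are frozen, so every \<open>\<sigma>\<close>-row of the
  Jacobian vanishes and \<open>0\<close> is an eigenvalue. In the antipodal configuration with
  \<open>\<beta> = 0\<close> all coefficients \<open>sin (a\<^sub>i - a\<^sub>j)\<close> vanish, so \<open>\<psi>\<close> enters \<open>\<psi>'\<close> only
  through the products with \<open>\<sigma>\<close>, which is zero at the equilibrium. The Jacobian then
  has the block form \<open>[[0, B], [0, 0]]\<close>; its square is zero, hence it is nilpotent.\<close>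

lemma det_zero_if_zero_row:
  assumes A: "(A :: 'a :: comm_ring_1 mat) \<in> carrier_mat n n" and k: "k < n"
    and zero_row: "\<And>j. j < n \<Longrightarrow> A $$ (k, j) = 0"
  shows "det A = 0"
proof -
  have "(\<Prod>i = 0..<n. A $$ (i, p i)) = 0" if p: "p permutes {0..<n}" for p
  proof (rule prod_zero)
    have "p k < n" using p k by (meson atLeastLessThan_iff permutes_in_image zero_le)
    then show "\<exists>i\<in>{0..<n}. A $$ (i, p i) = 0" using k zero_row by (intro bexI[of _ k]) auto
  qed simp
  then show ?thesis using A by (simp add: det_def')
qed

lemma eigenvalue_zero_if_zero_row:
  assumes A: "(A :: 'a :: idom mat) \<in> carrier_mat n n" and "k < n"
    and "\<And>j. j < n \<Longrightarrow> A $$ (k, j) = 0"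
  shows "eigenvalue A 0"
proof -
  have "det A = 0" using assms by (rule det_zero_if_zero_row)
  then obtain v where "v \<in> carrier_vec n" "v \<noteq> 0\<^sub>v n" "A *\<^sub>v v = 0\<^sub>v n"
    using det_0_iff_vec_prod_zero[OF A] by auto
  then have "eigenvector A v 0" using A unfolding eigenvector_def by auto
  then show ?thesis unfolding eigenvalue_def by auto
qed

lemma square_zero_if_off_diagonal_block:
  assumes A: "(A :: 'a :: semiring_0 mat) \<in> carrier_mat n n"
    and block: "\<And>r c. r < n \<Longrightarrow> c < n \<Longrightarrow> A $$ (r, c) \<noteq> 0 \<Longrightarrow> r < k \<and> k \<le> c"
  shows "A * A = 0\<^sub>m n n"
proof (rule eq_matI)
  fix r c assume rc: "r < dim_row (0\<^sub>m n n :: 'a mat)" "c < dim_col (0\<^sub>m n n :: 'a mat)"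
  have "A $$ (r, m) * A $$ (m, c) = 0" if "m < n" for m
    using block[of r m] block[of m c] rc that by fastforce
  then show "(A * A) $$ (r, c) = 0\<^sub>m n n $$ (r, c)"
    using A rc by (simp add: scalar_prod_def sum.neutral)
qed (use A in auto)

lemma eigenvalue_zero_if_square_zero:
  assumes A: "(A :: 'a :: idom mat) \<in> carrier_mat n n" and "A * A = 0\<^sub>m n n"
    and "eigenvalue A z"
  shows "z = 0"
proof -
  obtain v where v: "eigenvector A v z" using assms(3) unfolding eigenvalue_def by auto
  then have carrier: "v \<in> carrier_vec n" and nonzero: "v \<noteq> 0\<^sub>v n"
    using A unfolding eigenvector_def by auto
  have "z ^ 2 \<cdot>\<^sub>v v = 0\<^sub>m n n *\<^sub>v v"
    using eigenvector_pow[OF A v, of 2] assms(2) by (simp add: numeral_2_eq_2)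
  also have "\<dots> = 0\<^sub>v n" using carrier by (intro eq_vecI) auto
  finally have square_smult: "z ^ 2 \<cdot>\<^sub>v v = 0\<^sub>v n" .
  have "\<exists>i<n. v $ i \<noteq> 0"
  proof (rule ccontr)
    assume "\<not> (\<exists>i<n. v $ i \<noteq> 0)"
    then have "v = 0\<^sub>v n" using carrier by (intro eq_vecI) auto
    with nonzero show False by contradiction
  qed
  then obtain i where "i < n" "v $ i \<noteq> 0" by blast
  moreover have "z ^ 2 * v $ i = 0"
    using arg_cong[OF square_smult, of "\<lambda>w. w $ i"] \<open>i < n\<close> carrier by simp
  ultimately show ?thesis by simp
qed

lemma sig_idx_bounds:
  assumes "i < N" "j < N"
  shows "N \<le> sig_idx N i j" "sig_idx N i j < state_dim N"
proof -
  have "i * N + j < Suc i * N" using assms(2) by simp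
  also have "\<dots> \<le> N * N" using assms(1) by (intro mult_le_mono1) simp
  finally show "sig_idx N i j < state_dim N" by (simp add: sig_idx_def state_dim_def)
qed (simp add: sig_idx_def)

lemma layer_field_nth:
  assumes "r < state_dim N"
  shows "layer_field N \<alpha> \<beta> a x $ r = (if r < N then
       - Omega_star N \<alpha> \<beta> a r
       + (1 / real N) * (\<Sum>j<N. sin (a r - a j + \<beta>) * sin (x $ r + a r - x $ j - a j + \<alpha>))
       - (1 / real N) * (\<Sum>j<N. x $ sig_idx N r j * sin (x $ r + a r - x $ j - a j + \<alpha>))
     else 0)"
  using assms unfolding layer_field_def by simp

lemma layer_field_origin:
  "layer_field N \<alpha> \<beta> a (0\<^sub>v (state_dim N)) = 0\<^sub>v (state_dim N)"
proof (rule eq_vecI)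
  let ?O = "0\<^sub>v (state_dim N) :: real vec"
  fix r assume "r < dim_vec ?O"
  then have r: "r < state_dim N" by simp
  have "layer_field N \<alpha> \<beta> a ?O $ r = 0" if "r < N"
  proof -
    have j: "j < state_dim N" "sig_idx N r j < state_dim N" if "j < N" for j
      using sig_idx_bounds[OF \<open>r < N\<close> that] that by (auto simp: state_dim_def)
    have "(\<Sum>j<N. sin (a r - a j + \<beta>) * sin (?O $ r + a r - ?O $ j - a j + \<alpha>))
        = (\<Sum>j<N. sin (a r - a j + \<alpha>) * sin (a r - a j + \<beta>))"
      using r j by (intro sum.cong) auto
    moreover have "(\<Sum>j<N. ?O $ sig_idx N r j * sin (?O $ r + a r - ?O $ j - a j + \<alpha>)) = 0"
      using j by (intro sum.neutral) auto
    ultimately show ?thesis using r that by (simp add: layer_field_nth Omega_star_def)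
  qed
  then show "layer_field N \<alpha> \<beta> a ?O $ r = ?O $ r"
    using r by (simp add: layer_field_nth)
qed (simp add: layer_field_def)

lemma dim_layer_jacobian [simp]:
  "dim_row (layer_jacobian N \<alpha> \<beta> a x0) = state_dim N"
  "dim_col (layer_jacobian N \<alpha> \<beta> a x0) = state_dim N"
  unfolding layer_jacobian_def by simp_all

lemma layer_jacobian_nth:
  assumes "r < state_dim N" "c < state_dim N"
  shows "layer_jacobian N \<alpha> \<beta> a x0 $$ (r, c) =
     deriv (\<lambda>t. layer_field N \<alpha> \<beta> a (x0 + t \<cdot>\<^sub>v unit_vec (state_dim N) c) $ r) 0"
  using assms unfolding layer_jacobian_def by simp

lemma layer_jacobian_sigma_row:
  assumes "r < state_dim N" "c < state_dim N" "N \<le> r"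
  shows "layer_jacobian N \<alpha> \<beta> a x0 $$ (r, c) = 0"
  using assms by (simp add: layer_jacobian_nth layer_field_nth)

lemma layer_field_antipodal:
  assumes antipodal: "\<forall>i<N. a i \<in> {0, pi}" and r: "r < N"
  shows "layer_field N \<alpha> 0 a x $ r =
    - (1 / real N) * (\<Sum>j<N. x $ sig_idx N r j * sin (x $ r + a r - x $ j - a j + \<alpha>))"
proof -
  have sin_zero: "sin (a r - a j) = 0" if "j < N" for j
    using antipodal[rule_format, OF r] antipodal[rule_format, OF that] by auto
  have "r < state_dim N" using r by (simp add: state_dim_def)
  then show ?thesis using r sin_zero by (simp add: layer_field_nth Omega_star_def)
qed

lemma layer_jacobian_psi_block_antipodal:
  assumes antipodal: "\<forall>i<N. a i \<in> {0, pi}" and "r < N" "c < N"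
  shows "layer_jacobian N \<alpha> 0 a (0\<^sub>v (state_dim N)) $$ (r, c) = 0"
proof -
  let ?x = "\<lambda>t :: real. 0\<^sub>v (state_dim N) + t \<cdot>\<^sub>v unit_vec (state_dim N) c"
  have "?x t $ sig_idx N r j = 0" if "j < N" for t j
    using sig_idx_bounds[OF \<open>r < N\<close> that] \<open>c < N\<close> by (simp add: unit_vec_def)
  then have "layer_field N \<alpha> 0 a (?x t) $ r = 0" for t
    using \<open>r < N\<close> by (simp add: layer_field_antipodal[OF antipodal])
  then show ?thesis
    using assms by (simp add: layer_jacobian_nth state_dim_def)
qed

theorem proposition4:
  fixes N :: nat and \<alpha> \<beta> :: real and a :: "nat \<Rightarrow> real"
  assumes "N \<ge> 1"
    and "\<forall>i<N. 0 \<le> a i \<and> a i < 2 * pi"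
  shows "layer_field N \<alpha> \<beta> a (0\<^sub>v (state_dim N)) = 0\<^sub>v (state_dim N)
    \<and> non_hyperbolic (layer_jacobian N \<alpha> \<beta> a (0\<^sub>v (state_dim N)))
    \<and> ((\<forall>i<N. a i \<in> {0, pi}) \<and> \<beta> = 0 \<longrightarrow>
         nilpotent_eq (layer_jacobian N \<alpha> \<beta> a (0\<^sub>v (state_dim N))))"
proof (intro conjI impI)
  let ?J = "map_mat complex_of_real (layer_jacobian N \<alpha> \<beta> a (0\<^sub>v (state_dim N)))"
  have J: "?J \<in> carrier_mat (state_dim N) (state_dim N)"
    by (simp add: carrier_matI)
  have N: "N < state_dim N" using assms(1) by (simp add: state_dim_def)
  show "layer_field N \<alpha> \<beta> a (0\<^sub>v (state_dim N)) = 0\<^sub>v (state_dim N)"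
    by (rule layer_field_origin)
  have "eigenvalue ?J 0"
    using J N by (rule eigenvalue_zero_if_zero_row) (simp add: layer_jacobian_sigma_row N)
  then show "non_hyperbolic (layer_jacobian N \<alpha> \<beta> a (0\<^sub>v (state_dim N)))"
    unfolding non_hyperbolic_def by auto
  assume "(\<forall>i<N. a i \<in> {0, pi}) \<and> \<beta> = 0"
  then have "r < N \<and> N \<le> c"
    if "r < state_dim N" "c < state_dim N" "?J $$ (r, c) \<noteq> 0" for r c
    using that layer_jacobian_sigma_row[of r N c]
      layer_jacobian_psi_block_antipodal[of N a r c \<alpha>]
    by (cases "r < N"; cases "c < N") auto
  then have "?J * ?J = 0\<^sub>m (state_dim N) (state_dim N)"
    using J by (intro square_zero_if_off_diagonal_block)
  then show "nilpotent_eq (layer_jacobian N \<alpha> \<beta> a (0\<^sub>v (state_dim N)))"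
    unfolding nilpotent_eq_def using eigenvalue_zero_if_square_zero[OF J] by blast
qed

end
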